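(* Let $\mathcal{R}_{\mathrm{con}}$ be the set of isomorphism classes of finite connected racks. The homomorphism of abelian groups $$\mathbb{Z}\{\mathcal{R}_{\mathrm{con}}\}\longrightarrow \mathrm{B}(\mathcal{R}),\qquad [R]\longmapsto b(R),$$ from the free abelian group with basis $\mathcal{R}_{\mathrm{con}}$ to the Burnside ring of finite racks, is an isomorphism. In other words, the elements $b(R)$, for $R$ ranging over the finite connected racks up to isomorphism, form an integral basis of $\mathrm{B}(\mathcal{R})$. In particular, the abelian group $\mathrm{B}(\mathcal{R})$ is torsion-free.
   Context: A rack is a set $R$ with a binary operation $\rhd$ such that every left multiplication $\ell_a\colon b\mapsto a\rhd b$ is a bijection and $a\rhd(b\rhd c)=(a\rhd b)\rhd(a\rhd c)$ for all $a,b,c$. Morphisms of racks are maps preserving $\rhd$. The inner automorphism group $\mathrm{Inn}(R)$ is the subgroup of the symmetric group on $R$ generated by all $\ell_a$. A rack is connected if it is non-empty and $\mathrm{Inn}(R)$ acts transitively on $R$. A subrack of $R$ is a subset $S$ with $\ell_s(S)=S$ for all $s\in S$. A decomposition of $R$ into $S$ and $T$ means that $S,T$ are disjoint subracks (possibly empty) with $S\cup T=R$. The Burnside ring of finite racks $\mathrm{B}(\mathcal{R})$ is the abelian group generated by symbols $b(R)$, one for each finite rack $R$, subject to the relations $b(R_1)=b(R_2)$ whenever $R_1\cong R_2$, and $b(R)=b(S)+b(T)$ whenever $R$ decomposes into subracks $S$ and $T$. *)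

theory Defs
  imports "HOL-Algebra.Free_Abelian_Groups" "HOL-Algebra.Bij"
          "HOL-Algebra.Generated_Groups" "HOL-Algebra.Coset"
begin

definition is_rack :: "'a set \<Rightarrow> ('a \<Rightarrow> 'a \<Rightarrow> 'a) \<Rightarrow> bool" where
  "is_rack A op \<longleftrightarrow>
     (\<forall>a\<in>A. \<forall>b\<in>A. op a b \<in> A) \<and>
     (\<forall>a\<in>A. bij_betw (op a) A A) \<and>
     (\<forall>a\<in>A. \<forall>b\<in>A. \<forall>c\<in>A. op a (op b c) = op (op a b) (op a c))"

definition rack_iso :: "'a set \<times> ('a \<Rightarrow> 'a \<Rightarrow> 'a) \<Rightarrow> 'b set \<times> ('b \<Rightarrow> 'b \<Rightarrow> 'b) \<Rightarrow> bool" where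
  "rack_iso R1 R2 \<longleftrightarrow> (\<exists>f. bij_betw f (fst R1) (fst R2) \<and>
     (\<forall>a\<in>fst R1. \<forall>b\<in>fst R1. f (snd R1 a b) = snd R2 (f a) (f b)))"

definition Inn :: "'a set \<Rightarrow> ('a \<Rightarrow> 'a \<Rightarrow> 'a) \<Rightarrow> ('a \<Rightarrow> 'a) set" where
  "Inn A op = generate (BijGroup A) ((\<lambda>a. restrict (op a) A) ` A)"

definition rack_connected :: "'a set \<Rightarrow> ('a \<Rightarrow> 'a \<Rightarrow> 'a) \<Rightarrow> bool" where
  "rack_connected A op \<longleftrightarrow> A \<noteq> {} \<and> (\<forall>x\<in>A. \<forall>y\<in>A. \<exists>g\<in>Inn A op. g x = y)"

definition subrack :: "'a set \<Rightarrow> 'a set \<Rightarrow> ('a \<Rightarrow> 'a \<Rightarrow> 'a) \<Rightarrow> bool" where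
  "subrack S A op \<longleftrightarrow> S \<subseteq> A \<and> (\<forall>s\<in>S. op s ` S = S)"

definition rack_decomp :: "'a set \<Rightarrow> 'a set \<Rightarrow> 'a set \<Rightarrow> ('a \<Rightarrow> 'a \<Rightarrow> 'a) \<Rightarrow> bool" where
  "rack_decomp S T A op \<longleftrightarrow> subrack S A op \<and> subrack T A op \<and> S \<inter> T = {} \<and> S \<union> T = A"

text \<open>Finite racks, represented with carriers that are finite subsets of nat
  (every finite rack is isomorphic to one of these).\<close>
type_synonym nrack = "nat set \<times> (nat \<Rightarrow> nat \<Rightarrow> nat)"

definition fin_racks :: "nrack set" where
  "fin_racks = {(A, op). finite A \<and> is_rack A op}"

definition burnside_rels :: "nrack set \<Rightarrow> (nrack \<Rightarrow>\<^sub>0 int) set" where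
  "burnside_rels X =
     {frag_of R1 - frag_of R2 | R1 R2. R1 \<in> X \<and> R2 \<in> X \<and> rack_iso R1 R2} \<union>
     {frag_of (A, op) - frag_of (S, op) - frag_of (T, op) | A op S T.
        (A, op) \<in> X \<and> rack_decomp S T A op}"

definition burnside_sub :: "(nrack \<Rightarrow>\<^sub>0 int) set" where
  "burnside_sub = generate (free_Abelian_group fin_racks) (burnside_rels fin_racks)"

definition burnside_group :: "(nrack \<Rightarrow>\<^sub>0 int) set monoid" where
  "burnside_group = free_Abelian_group fin_racks Mod burnside_sub"

definition bclass :: "nrack \<Rightarrow> (nrack \<Rightarrow>\<^sub>0 int) set" where
  "bclass R = burnside_sub #>\<^bsub>free_Abelian_group fin_racks\<^esub> frag_of R"

definition iso_class :: "nrack \<Rightarrow> nrack set" where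
  "iso_class R = {R' \<in> fin_racks. rack_iso R R'}"

definition conn_classes :: "nrack set set" where
  "conn_classes = {iso_class (A, op) | A op. (A, op) \<in> fin_racks \<and> rack_connected A op}"

text \<open>The homomorphism Z{R_con} -> B(R), [R] |-> b(R) (via a chosen representative
  of each class; the class b(R) does not depend on that choice).\<close>
definition conn_to_burnside :: "(nrack set \<Rightarrow>\<^sub>0 int) \<Rightarrow> (nrack \<Rightarrow>\<^sub>0 int) set" where
  "conn_to_burnside c = burnside_sub #>\<^bsub>free_Abelian_group fin_racks\<^esub>
      frag_extend (\<lambda>C. frag_of (SOME R. R \<in> C)) c"

end

theory Submission
  imports Defs
begin

text \<open>Call a subset of a rack invariant if every left multiplication maps it into itself.
  For a finite rack the invariant subsets are exactly the parts of decompositions, and the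
  rack is connected iff it has no invariant subset besides the empty set and itself.
  Sending a finite rack to the formal sum of the isomorphism classes of its maximal connected
  subracks is additive on decompositions and invariant under isomorphism, so it kills all
  relations of the Burnside group and gives a left inverse of [R] \<mapsto> b(R). Conversely,
  splitting a non-connected rack along an invariant subset and inducting on the cardinality
  writes every b(R) as a sum of classes of connected racks. Torsion-freeness is inherited from
  the free abelian group.\<close>

section \<open>Quotient groups and torsion\<close>

lemma iso_FactGroup_of_retraction:
  fixes G (structure)
  assumes N: "N \<lhd> G" and K: "group K"
    and e: "e \<in> hom H G" and r: "r \<in> hom G K" and ker: "N \<subseteq> kernel G K r"
    and retract: "\<And>c. c \<in> carrier H \<Longrightarrow> r (e c) = c"
    and onto: "\<And>x. x \<in> carrier G \<Longrightarrow> \<exists>c\<in>carrier H. x \<otimes> inv e c \<in> N"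
  shows "(\<lambda>c. N #> e c) \<in> iso H (G Mod N)"
proof -
  interpret normal N G by (rule N)
  interpret r: group_hom G K r
    using K r by (simp add: group_hom_def group_hom_axioms_def is_group)
  have eG: "e c \<in> carrier G" if "c \<in> carrier H" for c
    using hom_in_carrier[OF e that] .
  have hom: "(\<lambda>c. N #> e c) \<in> hom H (G Mod N)"
    using Group.hom_compose[OF e r_coset_hom_Mod] by (simp add: o_def)
  have "inj_on (\<lambda>c. N #> e c) (carrier H)"
  proof (rule inj_onI)
    fix c d assume c: "c \<in> carrier H" and d: "d \<in> carrier H" and eq: "N #> e c = N #> e d"
    have "e c \<in> N #> e d"
      using repr_independenceD[OF subgroup_axioms eG[OF c] eq[symmetric]] by simp
    then have "e c \<otimes> inv e d \<in> N"
      by (rule subgroup.rcos_module_imp[OF subgroup_axioms is_group eG[OF d]])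
    then have "r (e c) \<otimes>\<^bsub>K\<^esub> inv\<^bsub>K\<^esub> r (e d) = \<one>\<^bsub>K\<^esub>"
      using ker eG c d by (auto simp: kernel_def)
    then have "r (e c) = r (e d)"
      using eG c d by (metis group.inv_equality K r.H.inv_inv r.hom_closed r.H.inv_closed)
    then show "c = d" using retract c d by simp
  qed
  moreover have "(\<lambda>c. N #> e c) ` carrier H = carrier (G Mod N)"
  proof
    show "(\<lambda>c. N #> e c) ` carrier H \<subseteq> carrier (G Mod N)"
      using hom by (auto simp: hom_def)
    show "carrier (G Mod N) \<subseteq> (\<lambda>c. N #> e c) ` carrier H"
    proof
      fix X assume "X \<in> carrier (G Mod N)"
      then obtain x where x: "x \<in> carrier G" "X = N #> x"
        by (auto simp: carrier_FactGroup RCOSETS_def)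
      obtain c where c: "c \<in> carrier H" "x \<otimes> inv e c \<in> N" using onto[OF x(1)] by blast
      have "x \<in> N #> e c"
        by (rule subgroup.rcos_module_rev[OF subgroup_axioms is_group eG[OF c(1)] x(1) c(2)])
      then have "N #> e c = X"
        using x(2) repr_independence[OF _ eG[OF c(1)] subgroup_axioms] by simp
      then show "X \<in> (\<lambda>c. N #> e c) ` carrier H" using c(1) by blast
    qed
  qed
  ultimately show ?thesis using hom by (simp add: iso_def bij_betw_def)
qed

definition torsion_free :: "('a, 'b) monoid_scheme \<Rightarrow> bool" where
  "torsion_free G \<longleftrightarrow>
     (\<forall>x\<in>carrier G. \<forall>n::int. n \<noteq> 0 \<longrightarrow> x [^]\<^bsub>G\<^esub> n = \<one>\<^bsub>G\<^esub> \<longrightarrow> x = \<one>\<^bsub>G\<^esub>)"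

lemma torsion_free_free_Abelian_group: "torsion_free (free_Abelian_group S)"
  unfolding torsion_free_def
  by (metis carrier_free_Abelian_group_iff int_pow_free_Abelian_group one_free_Abelian_group
      lookup_frag_cmul mult_eq_0_iff poly_mapping_eqI lookup_zero)

lemma torsion_free_iso:
  fixes G (structure)
  assumes h: "h \<in> iso G H" and "group G" "group H" and tf: "torsion_free G"
  shows "torsion_free H"
  unfolding torsion_free_def
proof (intro ballI allI impI)
  interpret group_hom G H h
    using assms iso_imp_homomorphism by (simp add: group_hom_def group_hom_axioms_def)
  fix y n assume y: "y \<in> carrier H" and n: "(n::int) \<noteq> 0" and pow: "y [^]\<^bsub>H\<^esub> n = \<one>\<^bsub>H\<^esub>"
  obtain x where x: "x \<in> carrier G" "y = h x"
    using h y by (auto simp: iso_def bij_betw_def)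
  have "h (x [^] n) = h \<one>" using hom_int_pow x pow by simp
  then have "x [^] n = \<one>"
    using h x by (auto simp: iso_def bij_betw_def inj_on_def)
  then have "x = \<one>" using tf x n by (simp add: torsion_free_def)
  then show "y = \<one>\<^bsub>H\<^esub>" using x by simp
qed

section \<open>Invariant subsets and decompositions\<close>

lemma rack_bij_betw: "is_rack A op \<Longrightarrow> a \<in> A \<Longrightarrow> bij_betw (op a) A A"
  by (simp add: is_rack_def)

lemma rack_closed: "is_rack A op \<Longrightarrow> a \<in> A \<Longrightarrow> b \<in> A \<Longrightarrow> op a b \<in> A"
  by (simp add: is_rack_def)

lemma is_rack_subrack:
  assumes "is_rack A op" "subrack S A op"
  shows "is_rack S op"
proof -
  have SA: "S \<subseteq> A" and im: "\<And>s. s \<in> S \<Longrightarrow> op s ` S = S"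
    using assms(2) by (auto simp: subrack_def)
  show ?thesis unfolding is_rack_def
  proof (intro conjI ballI)
    fix a assume a: "a \<in> S"
    have "inj_on (op a) S"
      using rack_bij_betw[OF assms(1)] a SA inj_on_subset unfolding bij_betw_def by blast
    then show "bij_betw (op a) S S" using im[OF a] by (simp add: bij_betw_def)
  next
    fix a b c assume "a \<in> S" "b \<in> S" "c \<in> S"
    then show "op a (op b c) = op (op a b) (op a c)"
      using assms(1) SA unfolding is_rack_def by blast
  qed (use im in blast)
qed

lemma fin_racks_subrack: "(A, op) \<in> fin_racks \<Longrightarrow> subrack S A op \<Longrightarrow> (S, op) \<in> fin_racks"
  unfolding fin_racks_def using is_rack_subrack
  by (auto simp: subrack_def intro: finite_subset)

definition rack_invariant :: "'a set \<Rightarrow> ('a \<Rightarrow> 'a \<Rightarrow> 'a) \<Rightarrow> 'a set \<Rightarrow> bool" where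
  "rack_invariant A op S \<longleftrightarrow> S \<subseteq> A \<and> (\<forall>a\<in>A. \<forall>s\<in>S. op a s \<in> S)"

definition rack_indecomposable :: "'a set \<Rightarrow> ('a \<Rightarrow> 'a \<Rightarrow> 'a) \<Rightarrow> bool" where
  "rack_indecomposable A op \<longleftrightarrow> A \<noteq> {} \<and> (\<forall>S. rack_invariant A op S \<longrightarrow> S = {} \<or> S = A)"

lemma rack_invariant_image:
  assumes "is_rack A op" "finite A" "rack_invariant A op S" "a \<in> A"
  shows "op a ` S = S"
proof (rule endo_inj_surj)
  show "finite S" using assms(2,3) finite_subset unfolding rack_invariant_def by blast
  show "op a ` S \<subseteq> S" using assms(3,4) by (auto simp: rack_invariant_def)
  show "inj_on (op a) S"
    using rack_bij_betw[OF assms(1,4)] assms(3) inj_on_subset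
    unfolding bij_betw_def rack_invariant_def by blast
qed

lemma rack_decomp_invariant:
  assumes "is_rack A op" "finite A" "rack_invariant A op S"
  shows "rack_decomp S (A - S) A op"
proof -
  have SA: "S \<subseteq> A" using assms(3) by (simp add: rack_invariant_def)
  have imS: "op a ` S = S" if "a \<in> A" for a using rack_invariant_image[OF assms that] .
  have "op a ` (A - S) = A - S" if a: "a \<in> A" for a
  proof -
    have bij: "bij_betw (op a) A A" using rack_bij_betw[OF assms(1) a] .
    then have "op a ` (A - S) = op a ` A - op a ` S"
      using SA unfolding bij_betw_def by (metis Diff_subset inj_on_image_set_diff order_refl)
    also have "\<dots> = A - S" using bij imS[OF a] by (simp add: bij_betw_def)
    finally show ?thesis .
  qed
  then show ?thesis unfolding rack_decomp_def subrack_def using SA imS by blast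
qed

lemma rack_invariant_decomp:
  assumes "is_rack A op" "rack_decomp S T A op"
  shows "rack_invariant A op S"
proof -
  have SA: "S \<subseteq> A" and TA: "T \<subseteq> A" and disj: "S \<inter> T = {}" and un: "S \<union> T = A"
    and imS: "\<And>s. s \<in> S \<Longrightarrow> op s ` S = S" and imT: "\<And>t. t \<in> T \<Longrightarrow> op t ` T = T"
    using assms(2) by (auto simp: rack_decomp_def subrack_def)
  have "op a x \<in> S" if a: "a \<in> A" and x: "x \<in> S" for a x
  proof (cases "a \<in> S")
    case True
    then show ?thesis using imS x by blast
  next
    case False
    then have aT: "a \<in> T" using a un by blast
    have inj: "inj_on (op a) A" using rack_bij_betw[OF assms(1) a] by (simp add: bij_betw_def)
    show ?thesis
    proof (rule ccontr)
      assume "op a x \<notin> S"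
      then have "op a x \<in> T" using rack_closed[OF assms(1) a] x SA un by blast
      then obtain y where y: "y \<in> T" "op a x = op a y" using imT[OF aT] by blast
      then show False using inj x SA TA disj by (metis disjoint_iff inj_onD subsetD)
    qed
  qed
  then show ?thesis using SA by (simp add: rack_invariant_def)
qed

lemma subgroup_BijGroup_setwise_stabilizer:
  assumes "S \<subseteq> A"
  shows "subgroup {g \<in> Bij A. g ` S = S} (BijGroup A)"
proof (rule subgroup.intro)
  show "{g \<in> Bij A. g ` S = S} \<subseteq> carrier (BijGroup A)" by (auto simp: BijGroup_def)
  show "\<one>\<^bsub>BijGroup A\<^esub> \<in> {g \<in> Bij A. g ` S = S}"
    using assms by (auto simp: BijGroup_def id_Bij)
next
  fix g h assume g: "g \<in> {g \<in> Bij A. g ` S = S}" and h: "h \<in> {g \<in> Bij A. g ` S = S}"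
  have "compose A g h ` S = g ` h ` S"
    using assms by (auto simp: compose_def image_iff subset_iff)
  then have "compose A g h ` S = S" using g h by simp
  then show "g \<otimes>\<^bsub>BijGroup A\<^esub> h \<in> {g \<in> Bij A. g ` S = S}"
    using g h by (simp add: BijGroup_def compose_Bij)
next
  fix g assume g: "g \<in> {g \<in> Bij A. g ` S = S}"
  then have "bij_betw g A A" by (simp add: Bij_def)
  then have "inv_into A g ` S = S"
    using g assms inv_into_image_cancel[of g A S] by (simp add: bij_betw_def)
  moreover have "restrict (inv_into A g) A ` S = inv_into A g ` S"
    using assms by (auto simp: image_iff subset_iff)
  ultimately show "inv\<^bsub>BijGroup A\<^esub> g \<in> {g \<in> Bij A. g ` S = S}"
    using g inv_BijGroup[of g A] restrict_inv_into_Bij[of g A] by simp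
qed

section \<open>Connectedness and isomorphisms\<close>

lemma restrict_left_mult_Bij: "is_rack A op \<Longrightarrow> a \<in> A \<Longrightarrow> restrict (op a) A \<in> Bij A"
  by (simp add: Bij_def rack_bij_betw)

lemma Inn_subset_Bij: "is_rack A op \<Longrightarrow> Inn A op \<subseteq> Bij A"
  unfolding Inn_def
  by (rule order_trans[OF group.generate_incl[OF group_BijGroup]])
     (auto simp: BijGroup_def restrict_left_mult_Bij)

lemma Inn_image_invariant:
  assumes "is_rack A op" "finite A" "rack_invariant A op S" "g \<in> Inn A op"
  shows "g ` S = S"
proof -
  have SA: "S \<subseteq> A" using assms(3) by (simp add: rack_invariant_def)
  have "restrict (op a) A ` S = S" if "a \<in> A" for a
  proof -
    have "restrict (op a) A ` S = op a ` S" by (rule image_cong[OF refl]) (use SA in auto)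
    then show ?thesis using rack_invariant_image[OF assms(1-3) that] by (rule trans)
  qed
  then have "(\<lambda>a. restrict (op a) A) ` A \<subseteq> {g \<in> Bij A. g ` S = S}"
    using restrict_left_mult_Bij[OF assms(1)] by blast
  then have "Inn A op \<subseteq> {g \<in> Bij A. g ` S = S}"
    unfolding Inn_def
    by (rule group.generate_subgroup_incl[OF group_BijGroup _ subgroup_BijGroup_setwise_stabilizer[OF SA]])
  then show ?thesis using assms(4) by blast
qed

lemma rack_invariant_Inn_orbit:
  assumes "is_rack A op" "x \<in> A"
  shows "rack_invariant A op {g x | g. g \<in> Inn A op}"
proof -
  have closed: "g x \<in> A" if "g \<in> Inn A op" for g
    using that Inn_subset_Bij[OF assms(1)] assms(2) by (auto simp: Bij_def bij_betw_apply)
  have "op a (g x) \<in> {g x | g. g \<in> Inn A op}" if a: "a \<in> A" and g: "g \<in> Inn A op" for a g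
  proof -
    have "restrict (op a) A \<otimes>\<^bsub>BijGroup A\<^esub> g \<in> Inn A op"
      unfolding Inn_def using a g[unfolded Inn_def] by (blast intro: generate.eng generate.incl)
    moreover have "(restrict (op a) A \<otimes>\<^bsub>BijGroup A\<^esub> g) x = op a (g x)"
      using restrict_left_mult_Bij[OF assms(1) a] g Inn_subset_Bij[OF assms(1)] assms(2) closed[OF g]
      by (auto simp: BijGroup_def compose_def)
    ultimately show ?thesis by (metis (mono_tags, lifting) mem_Collect_eq)
  qed
  then show ?thesis using closed by (auto simp: rack_invariant_def)
qed

lemma rack_connected_iff_indecomposable:
  assumes "is_rack A op" "finite A"
  shows "rack_connected A op \<longleftrightarrow> rack_indecomposable A op"
proof
  assume conn: "rack_connected A op"
  show "rack_indecomposable A op" unfolding rack_indecomposable_def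
  proof (intro conjI allI impI)
    show "A \<noteq> {}" using conn by (simp add: rack_connected_def)
    fix S assume S: "rack_invariant A op S"
    have "A \<subseteq> S" if x: "x \<in> S" for x
    proof
      fix y assume "y \<in> A"
      moreover have "x \<in> A" using x S by (auto simp: rack_invariant_def)
      ultimately obtain g where "g \<in> Inn A op" "g x = y"
        using conn by (auto simp: rack_connected_def)
      then show "y \<in> S" using Inn_image_invariant[OF assms S] x by blast
    qed
    then show "S = {} \<or> S = A" using S by (auto simp: rack_invariant_def)
  qed
next
  assume indec: "rack_indecomposable A op"
  show "rack_connected A op" unfolding rack_connected_def
  proof (intro conjI ballI)
    show "A \<noteq> {}" using indec by (simp add: rack_indecomposable_def)
    fix x y assume x: "x \<in> A" and y: "y \<in> A"
    have "\<one>\<^bsub>BijGroup A\<^esub> \<in> Inn A op" unfolding Inn_def by (rule generate.one)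
    moreover have "\<one>\<^bsub>BijGroup A\<^esub> x = x" using x by (simp add: BijGroup_def)
    ultimately have "{g x | g. g \<in> Inn A op} \<noteq> {}" by blast
    then have "{g x | g. g \<in> Inn A op} = A"
      using indec rack_invariant_Inn_orbit[OF assms(1) x] unfolding rack_indecomposable_def by blast
    then have "y \<in> {g x | g. g \<in> Inn A op}" using y by simp
    then show "\<exists>g\<in>Inn A op. g x = y" by blast
  qed
qed

lemma rack_iso_refl: "rack_iso R R"
  unfolding rack_iso_def by (rule exI[of _ id]) simp

lemma rack_iso_trans:
  assumes "rack_iso R1 R2" "rack_iso R2 R3"
  shows "rack_iso R1 R3"
proof -
  obtain f where f: "bij_betw f (fst R1) (fst R2)"
    "\<forall>a\<in>fst R1. \<forall>b\<in>fst R1. f (snd R1 a b) = snd R2 (f a) (f b)"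
    using assms(1) by (auto simp: rack_iso_def)
  obtain g where g: "bij_betw g (fst R2) (fst R3)"
    "\<forall>a\<in>fst R2. \<forall>b\<in>fst R2. g (snd R2 a b) = snd R3 (g a) (g b)"
    using assms(2) by (auto simp: rack_iso_def)
  have "(g \<circ> f) (snd R1 a b) = snd R3 ((g \<circ> f) a) ((g \<circ> f) b)"
    if "a \<in> fst R1" "b \<in> fst R1" for a b
    using f g that bij_betw_apply[OF f(1)] by simp
  then show ?thesis
    unfolding rack_iso_def using bij_betw_trans[OF f(1) g(1)] by (intro exI[of _ "g \<circ> f"]) blast
qed

lemma inv_into_preserves_op:
  assumes f: "bij_betw f A1 A2" "\<forall>a\<in>A1. \<forall>b\<in>A1. f (op1 a b) = op2 (f a) (f b)"
    and closed: "\<forall>a\<in>A1. \<forall>b\<in>A1. op1 a b \<in> A1"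
  shows "\<forall>a\<in>A2. \<forall>b\<in>A2. inv_into A1 f (op2 a b) = op1 (inv_into A1 f a) (inv_into A1 f b)"
proof (intro ballI)
  fix a b assume a: "a \<in> A2" and b: "b \<in> A2"
  let ?g = "inv_into A1 f"
  have ga: "?g a \<in> A1" "f (?g a) = a" and gb: "?g b \<in> A1" "f (?g b) = b"
    using a b f(1) by (auto simp: bij_betw_def inv_into_into f_inv_into_f)
  have "op2 a b = f (op1 (?g a) (?g b))" using f(2) ga gb by metis
  then show "?g (op2 a b) = op1 (?g a) (?g b)"
    using closed ga gb f(1) by (simp add: bij_betw_def inv_into_f_f)
qed

lemma rack_iso_sym:
  assumes "rack_iso R1 R2" "is_rack (fst R1) (snd R1)"
  shows "rack_iso R2 R1"
proof -
  obtain f where f: "bij_betw f (fst R1) (fst R2)"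
    "\<forall>a\<in>fst R1. \<forall>b\<in>fst R1. f (snd R1 a b) = snd R2 (f a) (f b)"
    using assms(1) by (auto simp: rack_iso_def)
  have "\<forall>a\<in>fst R1. \<forall>b\<in>fst R1. snd R1 a b \<in> fst R1"
    using assms(2) by (simp add: is_rack_def)
  then show ?thesis unfolding rack_iso_def
    using bij_betw_inv_into[OF f(1)] inv_into_preserves_op[OF f] by blast
qed

lemma iso_class_eq:
  assumes "R1 \<in> fin_racks" "rack_iso R1 R2"
  shows "iso_class R1 = iso_class R2"
proof -
  have "is_rack (fst R1) (snd R1)" using assms(1) by (cases R1) (simp add: fin_racks_def)
  then have "rack_iso R2 R1" using assms(2) by (rule rack_iso_sym[rotated])
  then show ?thesis unfolding iso_class_def using rack_iso_trans assms(2) by blast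
qed

lemma subrack_image:
  assumes f: "bij_betw f A1 A2" "\<forall>a\<in>A1. \<forall>b\<in>A1. f (op1 a b) = op2 (f a) (f b)"
    and C: "subrack C A1 op1"
  shows "subrack (f ` C) A2 op2"
proof -
  have CA: "C \<subseteq> A1" and im: "\<And>c. c \<in> C \<Longrightarrow> op1 c ` C = C" using C by (auto simp: subrack_def)
  have "op2 (f c) ` f ` C = f ` C" if c: "c \<in> C" for c
  proof -
    have "op2 (f c) ` f ` C = f ` op1 c ` C"
      using f(2) c CA by (auto simp: image_iff) (metis subsetD)+
    then show ?thesis using im[OF c] by simp
  qed
  moreover have "f ` C \<subseteq> A2" using CA f(1) by (auto simp: bij_betw_def)
  ultimately show ?thesis by (auto simp: subrack_def)
qed

lemma rack_indecomposable_image: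
  assumes f: "bij_betw f A1 A2" "\<forall>a\<in>A1. \<forall>b\<in>A1. f (op1 a b) = op2 (f a) (f b)"
    and C: "subrack C A1 op1" and indec: "rack_indecomposable C op1"
  shows "rack_indecomposable (f ` C) op2"
  unfolding rack_indecomposable_def
proof (intro conjI allI impI)
  show "f ` C \<noteq> {}" using indec by (simp add: rack_indecomposable_def)
  have CA: "C \<subseteq> A1" and im: "\<And>c. c \<in> C \<Longrightarrow> op1 c ` C = C" using C by (auto simp: subrack_def)
  fix S' assume S': "rack_invariant (f ` C) op2 S'"
  have "rack_invariant C op1 (C \<inter> f -` S')" unfolding rack_invariant_def
  proof (intro conjI ballI)
    fix a s assume a: "a \<in> C" and s: "s \<in> C \<inter> f -` S'"
    have "op1 a s \<in> C" using im[OF a] s by blast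
    moreover have "f (op1 a s) = op2 (f a) (f s)" using f(2) a s CA by blast
    moreover have "op2 (f a) (f s) \<in> S'" using S' a s by (auto simp: rack_invariant_def)
    ultimately show "op1 a s \<in> C \<inter> f -` S'" by simp
  qed blast
  then have "C \<inter> f -` S' = {} \<or> C \<inter> f -` S' = C"
    using indec by (simp add: rack_indecomposable_def)
  moreover have "S' = f ` (C \<inter> f -` S')" using S' by (auto simp: rack_invariant_def)
  ultimately show "S' = {} \<or> S' = f ` C" by (metis image_empty)
qed

section \<open>Connected components\<close>

definition rack_components :: "'a set \<Rightarrow> ('a \<Rightarrow> 'a \<Rightarrow> 'a) \<Rightarrow> 'a set set" where
  "rack_components A op = {C. subrack C A op \<and> rack_indecomposable C op \<and>
     (\<forall>D. subrack D A op \<and> rack_indecomposable D op \<and> C \<subseteq> D \<longrightarrow> D = C)}"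

lemma rack_components_subset: "C \<in> rack_components A op \<Longrightarrow> C \<subseteq> A"
  by (simp add: rack_components_def subrack_def)

lemma finite_rack_components: "finite A \<Longrightarrow> finite (rack_components A op)"
  by (rule finite_subset[of _ "Pow A"]) (auto dest: rack_components_subset)

lemma rack_indecomposable_subset_part:
  assumes "is_rack A op" "rack_decomp S T A op"
    and C: "subrack C A op" "rack_indecomposable C op"
  shows "C \<subseteq> S \<or> C \<subseteq> T"
proof -
  have S: "rack_invariant A op S" using rack_invariant_decomp[OF assms(1,2)] .
  have CA: "C \<subseteq> A" and imC: "\<And>c. c \<in> C \<Longrightarrow> op c ` C = C"
    using C(1) by (auto simp: subrack_def)
  have "rack_invariant C op (C \<inter> S)" unfolding rack_invariant_def
  proof (intro conjI ballI)
    fix a x assume a: "a \<in> C" and x: "x \<in> C \<inter> S"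
    have "op a x \<in> C" using imC[OF a] x by blast
    moreover have "op a x \<in> S" using S a x CA unfolding rack_invariant_def by blast
    ultimately show "op a x \<in> C \<inter> S" by blast
  qed blast
  then have "C \<inter> S = {} \<or> C \<inter> S = C" using C(2) by (simp add: rack_indecomposable_def)
  moreover have "A = S \<union> T" using assms(2) by (simp add: rack_decomp_def)
  ultimately show ?thesis using CA by blast
qed

lemma rack_components_decomp_part:
  assumes "is_rack A op" "rack_decomp S T A op"
  shows "rack_components S op = {C \<in> rack_components A op. C \<subseteq> S}"
proof -
  have SA: "S \<subseteq> A" and disj: "S \<inter> T = {}"
    using assms(2) by (auto simp: rack_decomp_def subrack_def)
  have subrack_S: "subrack D S op \<longleftrightarrow> subrack D A op \<and> D \<subseteq> S" for D
    using SA by (auto simp: subrack_def)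
  have grow_in_S: "D \<subseteq> S"
    if "C \<subseteq> S" "C \<noteq> {}" "subrack D A op" "rack_indecomposable D op" "C \<subseteq> D" for C D
    using rack_indecomposable_subset_part[OF assms that(3,4)] that(1,2,5) disj by blast
  show ?thesis
  proof (intro equalityI subsetI)
    fix C assume C: "C \<in> rack_components S op"
    then have CS: "C \<subseteq> S" and sub: "subrack C A op" and indec: "rack_indecomposable C op"
      by (auto simp: rack_components_def subrack_S)
    have "D = C" if "subrack D A op" "rack_indecomposable D op" "C \<subseteq> D" for D
      using C grow_in_S[OF CS _ that] indec that
      by (auto simp: rack_components_def subrack_S rack_indecomposable_def)
    then show "C \<in> {C \<in> rack_components A op. C \<subseteq> S}"
      using sub indec CS by (auto simp: rack_components_def)
  next
    fix C assume "C \<in> {C \<in> rack_components A op. C \<subseteq> S}"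
    then show "C \<in> rack_components S op" by (auto simp: rack_components_def subrack_S)
  qed
qed

lemma rack_decomp_sym: "rack_decomp S T A op \<Longrightarrow> rack_decomp T S A op"
  by (auto simp: rack_decomp_def)

lemma rack_components_decomp:
  assumes "is_rack A op" "rack_decomp S T A op"
  shows "rack_components A op = rack_components S op \<union> rack_components T op"
    and "rack_components S op \<inter> rack_components T op = {}"
proof -
  have disj: "S \<inter> T = {}" using assms(2) by (auto simp: rack_decomp_def)
  note S = rack_components_decomp_part[OF assms]
  note T = rack_components_decomp_part[OF assms(1) rack_decomp_sym[OF assms(2)]]
  have "C \<subseteq> S \<or> C \<subseteq> T" if "C \<in> rack_components A op" for C
    using rack_indecomposable_subset_part[OF assms] that by (auto simp: rack_components_def)
  then show "rack_components A op = rack_components S op \<union> rack_components T op"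
    using S T by blast
  have "C \<noteq> {}" if "C \<in> rack_components A op" for C
    using that by (auto simp: rack_components_def rack_indecomposable_def)
  then show "rack_components S op \<inter> rack_components T op = {}"
    using S T disj by blast
qed

lemma rack_components_indecomposable:
  assumes "is_rack A op" "rack_indecomposable A op"
  shows "rack_components A op = {A}"
proof -
  have sub: "subrack A A op" using assms(1) by (auto simp: subrack_def is_rack_def bij_betw_def)
  then have "A \<in> rack_components A op" using assms(2) by (auto simp: rack_components_def subrack_def)
  moreover have "C = A" if "C \<in> rack_components A op" for C
    using that sub assms(2) rack_components_subset[OF that] by (auto simp: rack_components_def)
  ultimately show ?thesis by blast
qed

lemma rack_components_image:
  assumes f: "bij_betw f A1 A2" "\<forall>a\<in>A1. \<forall>b\<in>A1. f (op1 a b) = op2 (f a) (f b)"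
    and g: "bij_betw g A2 A1" "\<forall>a\<in>A2. \<forall>b\<in>A2. g (op2 a b) = op1 (g a) (g b)"
    and gf: "\<And>x. x \<in> A1 \<Longrightarrow> g (f x) = x" and fg: "\<And>y. y \<in> A2 \<Longrightarrow> f (g y) = y"
    and C: "C \<in> rack_components A1 op1"
  shows "f ` C \<in> rack_components A2 op2"
proof -
  have sub: "subrack C A1 op1" and indec: "rack_indecomposable C op1"
    using C by (auto simp: rack_components_def)
  have "D = f ` C" if D: "subrack D A2 op2" "rack_indecomposable D op2" "f ` C \<subseteq> D" for D
  proof -
    have "subrack (g ` D) A1 op1" "rack_indecomposable (g ` D) op1"
      using subrack_image[OF g D(1)] rack_indecomposable_image[OF g D(1,2)] by auto
    moreover have "C \<subseteq> g ` D"
      using D(3) rack_components_subset[OF C] gf by (force simp: image_subset_iff)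
    ultimately have "g ` D = C" using C by (auto simp: rack_components_def)
    moreover have "f ` g ` D = D"
      using D(1) fg by (force simp: subrack_def image_image)
    ultimately show ?thesis by simp
  qed
  then show ?thesis
    using subrack_image[OF f sub] rack_indecomposable_image[OF f sub indec]
    by (auto simp: rack_components_def)
qed

lemma rack_components_iso:
  assumes "is_rack A1 op1" and f: "bij_betw f A1 A2" "\<forall>a\<in>A1. \<forall>b\<in>A1. f (op1 a b) = op2 (f a) (f b)"
  shows "rack_components A2 op2 = (\<lambda>C. f ` C) ` rack_components A1 op1"
    and "inj_on (\<lambda>C. f ` C) (rack_components A1 op1)"
proof -
  define g where "g = inv_into A1 f"
  have closed: "\<forall>a\<in>A1. \<forall>b\<in>A1. op1 a b \<in> A1" using assms(1) by (simp add: is_rack_def)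
  have g: "bij_betw g A2 A1" "\<forall>a\<in>A2. \<forall>b\<in>A2. g (op2 a b) = op1 (g a) (g b)"
    using bij_betw_inv_into[OF f(1)] inv_into_preserves_op[OF f closed] by (auto simp: g_def)
  have gf: "\<And>x. x \<in> A1 \<Longrightarrow> g (f x) = x" using f(1) by (simp add: g_def bij_betw_def inv_into_f_f)
  have fg: "\<And>y. y \<in> A2 \<Longrightarrow> f (g y) = y" using f(1) by (simp add: g_def bij_betw_def f_inv_into_f)
  show "rack_components A2 op2 = (\<lambda>C. f ` C) ` rack_components A1 op1"
  proof (intro equalityI subsetI)
    fix D assume D: "D \<in> rack_components A2 op2"
    have "D = f ` g ` D" using rack_components_subset[OF D] fg by (force simp: image_image)
    then show "D \<in> (\<lambda>C. f ` C) ` rack_components A1 op1"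
      using rack_components_image[OF g f fg gf D] by blast
  qed (use rack_components_image[OF f g gf fg] in blast)
  show "inj_on (\<lambda>C. f ` C) (rack_components A1 op1)"
    using f(1) rack_components_subset by (metis (no_types, lifting) bij_betw_def inj_on_image_eq_iff inj_onI)
qed

definition component_classes :: "nrack \<Rightarrow> (nrack set \<Rightarrow>\<^sub>0 int)" where
  "component_classes R = (\<Sum>C\<in>rack_components (fst R) (snd R). frag_of (iso_class (C, snd R)))"

lemma component_classes_decomp:
  assumes "(A, op) \<in> fin_racks" "rack_decomp S T A op"
  shows "component_classes (A, op) = component_classes (S, op) + component_classes (T, op)"
proof -
  have r: "is_rack A op" and fA: "finite A" using assms(1) by (auto simp: fin_racks_def)
  have "finite S" "finite T" using assms(2) fA
    by (auto simp: rack_decomp_def subrack_def intro: finite_subset)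
  then show ?thesis
    unfolding component_classes_def fst_conv snd_conv rack_components_decomp(1)[OF r assms(2)]
    by (intro sum.union_disjoint finite_rack_components rack_components_decomp(2)[OF r assms(2)])
qed

lemma component_classes_indecomposable:
  assumes "(A, op) \<in> fin_racks" "rack_indecomposable A op"
  shows "component_classes (A, op) = frag_of (iso_class (A, op))"
  using assms rack_components_indecomposable[of A op]
  by (simp add: component_classes_def fin_racks_def)

lemma component_classes_iso:
  assumes R1: "R1 \<in> fin_racks" and iso: "rack_iso R1 R2"
  shows "component_classes R1 = component_classes R2"
proof -
  obtain A1 op1 A2 op2 where R: "R1 = (A1, op1)" "R2 = (A2, op2)" by (cases R1, cases R2)
  obtain f where f: "bij_betw f A1 A2" "\<forall>a\<in>A1. \<forall>b\<in>A1. f (op1 a b) = op2 (f a) (f b)"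
    using iso by (auto simp: rack_iso_def R)
  have r: "is_rack A1 op1" using R1 by (simp add: R fin_racks_def)
  have same_class: "iso_class (f ` C, op2) = iso_class (C, op1)"
    if C: "C \<in> rack_components A1 op1" for C
  proof -
    have sub: "subrack C A1 op1" using C by (simp add: rack_components_def)
    have CA: "C \<subseteq> A1" using rack_components_subset[OF C] .
    have "bij_betw f C (f ` C)" using f(1) CA by (auto simp: bij_betw_def intro: inj_on_subset)
    moreover have "\<forall>a\<in>C. \<forall>b\<in>C. f (op1 a b) = op2 (f a) (f b)" using f(2) CA by blast
    ultimately have "rack_iso (C, op1) (f ` C, op2)" by (auto simp: rack_iso_def)
    then show ?thesis
      using iso_class_eq fin_racks_subrack[OF R1[unfolded R(1)] sub] by metis
  qed
  have "component_classes R2 = (\<Sum>C\<in>rack_components A1 op1. frag_of (iso_class (f ` C, op2)))"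
    by (simp add: component_classes_def R rack_components_iso(1)[OF r f]
        sum.reindex[OF rack_components_iso(2)[OF r f]])
  also have "\<dots> = component_classes R1"
    by (simp add: component_classes_def R same_class)
  finally show ?thesis by simp
qed

section \<open>The Burnside group\<close>

abbreviation free_racks :: "(nrack \<Rightarrow>\<^sub>0 int) monoid" where
  "free_racks \<equiv> free_Abelian_group fin_racks"

abbreviation free_conn :: "(nrack set \<Rightarrow>\<^sub>0 int) monoid" where
  "free_conn \<equiv> free_Abelian_group conn_classes"

definition lift_classes :: "(nrack set \<Rightarrow>\<^sub>0 int) \<Rightarrow> (nrack \<Rightarrow>\<^sub>0 int)" where
  "lift_classes = frag_extend (\<lambda>C. frag_of (SOME R. R \<in> C))"

definition count_components :: "(nrack \<Rightarrow>\<^sub>0 int) \<Rightarrow> (nrack set \<Rightarrow>\<^sub>0 int)" where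
  "count_components = frag_extend component_classes"

lemma burnside_rels_subset: "burnside_rels fin_racks \<subseteq> carrier free_racks"
proof
  fix x assume "x \<in> burnside_rels fin_racks"
  then consider (iso) R1 R2 where "x = frag_of R1 - frag_of R2" "R1 \<in> fin_racks" "R2 \<in> fin_racks"
    | (decomp) A op S T where "x = frag_of (A, op) - frag_of (S, op) - frag_of (T, op)"
        "(A, op) \<in> fin_racks" "rack_decomp S T A op"
    unfolding burnside_rels_def by blast
  then show "x \<in> carrier free_racks"
  proof cases
    case iso
    then show ?thesis using keys_diff[of "frag_of R1" "frag_of R2"] by auto
  next
    case decomp
    then have "(S, op) \<in> fin_racks" "(T, op) \<in> fin_racks"
      using fin_racks_subrack by (auto simp: rack_decomp_def)
    then show ?thesis
      using decomp keys_diff[of "frag_of (A, op) - frag_of (S, op)" "frag_of (T, op)"]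
        keys_diff[of "frag_of (A, op)" "frag_of (S, op)"] by auto
  qed
qed

lemma subgroup_burnside_sub: "subgroup burnside_sub free_racks"
  unfolding burnside_sub_def
  by (rule group.generate_is_subgroup[OF group_free_Abelian_group burnside_rels_subset])

lemma normal_burnside_sub: "burnside_sub \<lhd> free_racks"
  by (rule comm_group.subgroup_imp_normal[OF abelian_free_Abelian_group subgroup_burnside_sub])

lemma burnside_sub_add: "x \<in> burnside_sub \<Longrightarrow> y \<in> burnside_sub \<Longrightarrow> x + y \<in> burnside_sub"
  using subgroup.m_closed[OF subgroup_burnside_sub] by fastforce

lemma burnside_sub_uminus: "x \<in> burnside_sub \<Longrightarrow> - x \<in> burnside_sub"
  using subgroup.m_inv_closed[OF subgroup_burnside_sub] subgroup.subset[OF subgroup_burnside_sub]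
  by fastforce

lemma burnside_sub_diff: "x \<in> burnside_sub \<Longrightarrow> y \<in> burnside_sub \<Longrightarrow> x - y \<in> burnside_sub"
  using burnside_sub_add[OF _ burnside_sub_uminus] by fastforce

lemma iso_rel_in_burnside_sub:
  "R1 \<in> fin_racks \<Longrightarrow> R2 \<in> fin_racks \<Longrightarrow> rack_iso R1 R2 \<Longrightarrow> frag_of R1 - frag_of R2 \<in> burnside_sub"
  unfolding burnside_sub_def burnside_rels_def by (rule generate.incl) blast

lemma decomp_rel_in_burnside_sub:
  "(A, op) \<in> fin_racks \<Longrightarrow> rack_decomp S T A op
    \<Longrightarrow> frag_of (A, op) - frag_of (S, op) - frag_of (T, op) \<in> burnside_sub"
  unfolding burnside_sub_def burnside_rels_def by (rule generate.incl) blast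

lemma count_components_hom: "count_components \<in> hom free_racks (free_Abelian_group UNIV)"
  by (simp add: hom_def count_components_def frag_extend_add)

lemma burnside_sub_kernel:
  "burnside_sub \<subseteq> kernel free_racks (free_Abelian_group UNIV) count_components"
  unfolding burnside_sub_def
proof (rule group.generate_subgroup_incl[OF group_free_Abelian_group _ group_hom.subgroup_kernel])
  show "group_hom free_racks (free_Abelian_group UNIV) count_components"
    using count_components_hom by (simp add: group_hom_def group_hom_axioms_def)
  show "burnside_rels fin_racks \<subseteq> kernel free_racks (free_Abelian_group UNIV) count_components"
  proof
    fix x assume x: "x \<in> burnside_rels fin_racks"
    then consider (iso) R1 R2 where "x = frag_of R1 - frag_of R2" "R1 \<in> fin_racks" "rack_iso R1 R2"
      | (decomp) A op S T where "x = frag_of (A, op) - frag_of (S, op) - frag_of (T, op)"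
          "(A, op) \<in> fin_racks" "rack_decomp S T A op"
      unfolding burnside_rels_def by blast
    then have "count_components x = 0"
    proof cases
      case iso
      then show ?thesis
        using component_classes_iso by (simp add: count_components_def frag_extend_diff)
    next
      case decomp
      then show ?thesis
        using component_classes_decomp by (simp add: count_components_def frag_extend_diff)
    qed
    then show "x \<in> kernel free_racks (free_Abelian_group UNIV) count_components"
      unfolding kernel_def using subsetD[OF burnside_rels_subset x] by simp
  qed
qed

lemma conn_class_rep:
  assumes "C \<in> conn_classes"
  shows "(SOME R. R \<in> C) \<in> fin_racks" and "component_classes (SOME R. R \<in> C) = frag_of C"
proof -
  obtain A op where C: "C = iso_class (A, op)" "(A, op) \<in> fin_racks" "rack_connected A op"
    using assms by (auto simp: conn_classes_def)
  have "(A, op) \<in> C" using C rack_iso_refl by (auto simp: iso_class_def)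
  then have rep: "(SOME R. R \<in> C) \<in> C" by (rule someI)
  then show "(SOME R. R \<in> C) \<in> fin_racks" using C by (auto simp: iso_class_def)
  have "rack_iso (A, op) (SOME R. R \<in> C)" using rep C by (auto simp: iso_class_def)
  then have "component_classes (SOME R. R \<in> C) = component_classes (A, op)"
    using component_classes_iso[OF C(2)] by simp
  also have "\<dots> = frag_of C"
    using C component_classes_indecomposable rack_connected_iff_indecomposable
    by (auto simp: fin_racks_def)
  finally show "component_classes (SOME R. R \<in> C) = frag_of C" .
qed

lemma lift_classes_hom: "lift_classes \<in> hom free_conn free_racks"
proof (rule homI)
  fix c assume "c \<in> carrier free_conn"
  then show "lift_classes c \<in> carrier free_racks"
    using keys_frag_extend[of "\<lambda>C. frag_of (SOME R. R \<in> C)" c] conn_class_rep(1)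
    by (force simp: lift_classes_def)
qed (simp add: lift_classes_def frag_extend_add)

lemma count_components_lift_classes:
  assumes "c \<in> carrier free_conn"
  shows "count_components (lift_classes c) = c"
proof -
  have "count_components (lift_classes c)
      = frag_extend component_classes (frag_extend (frag_of \<circ> (\<lambda>C. SOME R. R \<in> C)) c)"
    by (simp add: count_components_def lift_classes_def o_def)
  also have "\<dots> = frag_extend (component_classes \<circ> (\<lambda>C. SOME R. R \<in> C)) c"
    by (rule frag_extend_compose)
  also have "\<dots> = frag_extend frag_of c"
    by (rule frag_extend_eq) (use assms conn_class_rep(2) in auto)
  also have "\<dots> = c" by (rule frag_expansion[symmetric])
  finally show ?thesis .
qed

definition lift_representable :: "(nrack \<Rightarrow>\<^sub>0 int) set" where
  "lift_representable = {x. \<exists>c\<in>carrier free_conn. x - lift_classes c \<in> burnside_sub}"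

lemma lift_representable_diff:
  assumes "x \<in> lift_representable" "y \<in> lift_representable"
  shows "x - y \<in> lift_representable"
proof -
  obtain c d where c: "c \<in> carrier free_conn" "x - lift_classes c \<in> burnside_sub"
    and d: "d \<in> carrier free_conn" "y - lift_classes d \<in> burnside_sub"
    using assms by (auto simp: lift_representable_def)
  have "(x - y) - lift_classes (c - d) = (x - lift_classes c) - (y - lift_classes d)"
    by (simp add: lift_classes_def frag_extend_diff)
  then have "(x - y) - lift_classes (c - d) \<in> burnside_sub"
    using burnside_sub_diff[OF c(2) d(2)] by (simp only:)
  moreover have "c - d \<in> carrier free_conn" using c d keys_diff[of c d] by auto
  ultimately show ?thesis by (auto simp: lift_representable_def)
qed

lemma burnside_sub_lift_representable: "x \<in> burnside_sub \<Longrightarrow> x \<in> lift_representable"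
  unfolding lift_representable_def by (rule CollectI, rule bexI[of _ 0]) (auto simp: lift_classes_def)

lemma zero_lift_representable: "0 \<in> lift_representable"
  using burnside_sub_lift_representable subgroup.one_closed[OF subgroup_burnside_sub] by simp

lemma lift_representable_add:
  assumes "x \<in> lift_representable" "y \<in> lift_representable"
  shows "x + y \<in> lift_representable"
  using lift_representable_diff[OF assms(1) lift_representable_diff[OF zero_lift_representable assms(2)]]
  by simp

lemma frag_of_indecomposable_lift_representable:
  assumes R: "(A, op) \<in> fin_racks" and indec: "rack_indecomposable A op"
  shows "frag_of (A, op) \<in> lift_representable"
proof -
  let ?C = "iso_class (A, op)"
  have "rack_connected A op"
    using R indec rack_connected_iff_indecomposable by (auto simp: fin_racks_def)
  then have C: "?C \<in> conn_classes" unfolding conn_classes_def using R by blast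
  have "(A, op) \<in> ?C" using R rack_iso_refl by (simp add: iso_class_def)
  then have "(SOME R. R \<in> ?C) \<in> ?C" by (rule someI)
  then have "rack_iso (A, op) (SOME R. R \<in> ?C)" by (simp add: iso_class_def)
  then have "frag_of (A, op) - lift_classes (frag_of ?C) \<in> burnside_sub"
    using iso_rel_in_burnside_sub[OF R conn_class_rep(1)[OF C]] by (simp add: lift_classes_def)
  then show ?thesis using C unfolding lift_representable_def by force
qed

lemma frag_of_lift_representable:
  assumes "(A, op) \<in> fin_racks"
  shows "frag_of (A, op) \<in> lift_representable"
  using assms
proof (induction "card A" arbitrary: A rule: less_induct)
  case less
  have r: "is_rack A op" and fA: "finite A" using less.prems by (auto simp: fin_racks_def)
  consider "rack_indecomposable A op" | "A = {}"
    | S where "rack_invariant A op S" "S \<noteq> {}" "S \<noteq> A"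
    unfolding rack_indecomposable_def by blast
  then show ?case
  proof cases
    case 1
    then show ?thesis by (rule frag_of_indecomposable_lift_representable[OF less.prems])
  next
    case 2
    \<comment> \<open>the empty rack decomposes into two copies of itself, so b(\<emptyset>) = 0\<close>
    then have "rack_decomp A A A op" by (simp add: rack_decomp_def subrack_def)
    from decomp_rel_in_burnside_sub[OF less.prems this]
    have "- frag_of (A, op) \<in> burnside_sub" by simp
    then show ?thesis
      using burnside_sub_lift_representable[OF burnside_sub_uminus] by fastforce
  next
    case (3 S)
    have decomp: "rack_decomp S (A - S) A op" using rack_decomp_invariant[OF r fA 3(1)] .
    have parts: "(S, op) \<in> fin_racks" "(A - S, op) \<in> fin_racks"
      using decomp fin_racks_subrack[OF less.prems] by (auto simp: rack_decomp_def)
    have "S \<subset> A" "A - S \<subset> A" using 3 by (auto simp: rack_invariant_def)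
    then have "card S < card A" "card (A - S) < card A" using psubset_card_mono[OF fA] by auto
    then have "frag_of (S, op) \<in> lift_representable" "frag_of (A - S, op) \<in> lift_representable"
      using less.hyps parts by blast+
    moreover have "frag_of (A, op) - frag_of (S, op) - frag_of (A - S, op) \<in> lift_representable"
      by (rule burnside_sub_lift_representable[OF decomp_rel_in_burnside_sub[OF less.prems decomp]])
    ultimately have "(frag_of (A, op) - frag_of (S, op) - frag_of (A - S, op))
        + frag_of (S, op) + frag_of (A - S, op) \<in> lift_representable"
      by (intro lift_representable_add)
    then show ?thesis by simp
  qed
qed

lemma lift_representable_all:
  assumes "x \<in> carrier free_racks"
  shows "x \<in> lift_representable"
proof (rule free_Abelian_group_induct[of x fin_racks])
  show "Poly_Mapping.keys x \<subseteq> fin_racks" using assms by simp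
  show "0 \<in> lift_representable" by (rule zero_lift_representable)
  show "frag_of R \<in> lift_representable" if "R \<in> fin_racks" for R
    using frag_of_lift_representable that by (cases R) blast
qed (rule lift_representable_diff)

theorem theorem4p1:
  shows "conn_to_burnside \<in> iso (free_Abelian_group conn_classes) burnside_group
    \<and> (\<forall>x\<in>carrier burnside_group. \<forall>n::int. n \<noteq> 0 \<longrightarrow>
          x [^]\<^bsub>burnside_group\<^esub> n = \<one>\<^bsub>burnside_group\<^esub> \<longrightarrow> x = \<one>\<^bsub>burnside_group\<^esub>)"
proof -
  have "conn_to_burnside = (\<lambda>c. burnside_sub #>\<^bsub>free_racks\<^esub> lift_classes c)"
    by (simp add: fun_eq_iff conn_to_burnside_def lift_classes_def)
  also have "\<dots> \<in> iso free_conn burnside_group"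
    unfolding burnside_group_def
  proof (rule iso_FactGroup_of_retraction[OF normal_burnside_sub group_free_Abelian_group
        lift_classes_hom count_components_hom burnside_sub_kernel count_components_lift_classes])
    fix x assume "x \<in> carrier free_racks"
    then obtain c where "c \<in> carrier free_conn" "x - lift_classes c \<in> burnside_sub"
      using lift_representable_all unfolding lift_representable_def by blast
    then show "\<exists>c\<in>carrier free_conn.
        x \<otimes>\<^bsub>free_racks\<^esub> inv\<^bsub>free_racks\<^esub> lift_classes c \<in> burnside_sub"
      using hom_in_carrier[OF lift_classes_hom] by auto
  qed
  finally have iso: "conn_to_burnside \<in> iso free_conn burnside_group" .
  have "group burnside_group"
    unfolding burnside_group_def by (rule normal.factorgroup_is_group[OF normal_burnside_sub])
  then have "torsion_free burnside_group"
    by (rule torsion_free_iso[OF iso group_free_Abelian_group _ torsion_free_free_Abelian_group])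
  with iso show ?thesis by (simp add: torsion_free_def)
qed

end
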